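(* Let $d_R\ge2$. (a) If the glue code is compatible with the memory via $S,T$ and finely devised for $\Sigma$, and $\gamma$ satisfies $J_{X,C}S^{\mathrm T}=\gamma H_G$, then $H^{M\text{-}M}_X(J^{M\text{-}M}_Z)^{\mathrm T}=0$, $H^{M\text{-}M}_Z(J^{M\text{-}M}_X)^{\mathrm T}=0$ and $J^{M\text{-}M}_X(J^{M\text{-}M}_Z)^{\mathrm T}=E_{k-q}$. (b) If the glue code is compatible with the memory via $S,T$, then $H^{M\text{-}B}_X(J^{M\text{-}B}_Z)^{\mathrm T}=0$, $H^{M\text{-}B}_Z(J^{M\text{-}B}_X)^{\mathrm T}=0$ and $J^{M\text{-}B}_X(J^{M\text{-}B}_Z)^{\mathrm T}=E_k$.
   Context: All vectors are row vectors over $\mathbb F_2$; $\mathrm{rs}A$ is the row space, $\ker A=\{x:Ax^{\mathrm T}=0\}$, $VM=\{vM:v\in V\}$, $E_m$ the identity. The memory is a CSS subsystem code specified by $H_X\in\mathbb F_2^{r_X\times n}$, $H_Z\in\mathbb F_2^{r_Z\times n}$, $J_X,J_Z\in\mathbb F_2^{k\times n}$, $F_X,F_Z\in\mathbb F_2^{k_g\times n}$ satisfying $\ker H_X=\mathrm{rs}H_Z\oplus\mathrm{rs}J_Z\oplus\mathrm{rs}F_Z$, $\ker H_Z=\mathrm{rs}H_X\oplus\mathrm{rs}J_X\oplus\mathrm{rs}F_X$, $J_XJ_Z^{\mathrm T}=E_k$, $F_XF_Z^{\mathrm T}=E_{k_g}$. Let $v_1,\dots,v_q\in\mathrm{rs}J_Z$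 be linearly independent (representing $\Sigma$), $J_{Z,A}$ the matrix with rows $v_1,\dots,v_q$; extend to a basis $v_1,\dots,v_k$ of $\mathrm{rs}J_Z$ and let $J_{Z,C}$ have rows $v_{q+1},\dots,v_k$. Let $\bar J_Z$ be the invertible $k\times k$ matrix with $\binom{J_{Z,A}}{J_{Z,C}}=\bar J_ZJ_Z$ and define $J_{X,A}\in\mathbb F_2^{q\times n}$, $J_{X,C}\in\mathbb F_2^{(k-q)\times n}$ by $\binom{J_{X,A}}{J_{X,C}}=(\bar J_Z^{-1})^{\mathrm T}J_X$. A glue code $H_G\in\mathbb F_2^{r_G\times n_G}$ is compatible via pasting matrices $S\in\mathbb F_2^{n_G\times n}$, $T\in\mathbb F_2^{r_X\times r_G}$ if $H_XS^{\mathrm T}=TH_G$; it is finely devised for $\Sigma$ if there exist $u_1,u_2,\dots\in\mathrm{rs}H_Z\oplus\mathrm{rs}F_Z$ with $\mathrm{span}(v_1,\dots,v_q,u_1,u_2,\dots)=(\ker H_G)S$. Measurement-sticker deformed code: coordinates are split into blocks $u_0\in\mathbb F_2^n$, $u_1,\dots,u_{d_R-1}\in\mathbb F_2^{n_G}$, $w_1,\dots,w_{d_R}\in\mathbb F_2^{r_G}$. $H^{M\text{-}M}_X$ has row-block $0$ equal to $H_X$ on $u_0$ and $T$ on $w_1$, and for $1\le j\le d_R-1$ row-block $j$ equal to $H_G$ on $u_j$, $E_{r_G}$ on $w_j$ and $E_{r_G}$ on $w_{j+1}$ (zero elsewhere). $H^{M\text{-}M}_Z$ has row-block $0$ equal to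 $H_Z$ on $u_0$, and for $1\le i\le d_R$ row-block $i$ equal to $S$ on $u_0$ (only if $i=1$), $E_{n_G}$ on $u_{i-1}$ (only if $i\ge2$), $E_{n_G}$ on $u_i$ (only if $i\le d_R-1$), and $H_G^{\mathrm T}$ on $w_i$. $J^{M\text{-}M}_X$ equals $J_{X,C}$ on $u_0$, $J_{X,C}S^{\mathrm T}$ on each of $u_1,\dots,u_{d_R-1}$, $0$ on $w_1,\dots,w_{d_R-1}$ and $\gamma$ on $w_{d_R}$; $J^{M\text{-}M}_Z$ equals $J_{Z,C}$ on $u_0$ and $0$ elsewhere. Branch-sticker deformed code: blocks $u_0\in\mathbb F_2^n$, $u_1,\dots,u_{d_R-1}\in\mathbb F_2^{n_G}$, $w_1,\dots,w_{d_R-1}\in\mathbb F_2^{r_G}$. $H^{M\text{-}B}_X$ has row-block $0$ equal to $H_X$ on $u_0$ and $T$ on $w_1$, and for $1\le j\le d_R-1$ row-block $j$ equal to $H_G$ on $u_j$, $E_{r_G}$ on $w_j$ and $E_{r_G}$ on $w_{j+1}$ (the latter only if $j\le d_R-2$). $H^{M\text{-}B}_Z$ has row-block $0$ equal to $H_Z$ on $u_0$, and for $1\le i\le d_R-1$ row-block $i$ equal to $S$ on $u_0$ (only if $i=1$), $E_{n_G}$ on $u_{i-1}$ (only if $i\ge2$), $E_{n_G}$ on $u_i$, and $H_G^{\mathrm T}$ on $w_i$. With $J'_X=\binom{J_{X,A}}{J_{X,C}}$, $J'_Z=\binom{J_{Z,A}}{J_{Z,C}}$: $J^{M\text{-}B}_X$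 equals $J'_X$ on $u_0$, $J'_XS^{\mathrm T}$ on each $u_j$ and $0$ on all $w_j$; $J^{M\text{-}B}_Z$ equals $J'_Z$ on $u_0$ and $0$ elsewhere. *)

theory Defs
  imports "Jordan_Normal_Form.Matrix" "HOL-Library.Z2"
begin

text \<open>Matrices over F_2 are JNF matrices with entries in the field type bit.
  A row vector of length n is represented by a JNF vector in carrier_vec n.\<close>

definition rs :: "'a::comm_ring_1 mat \<Rightarrow> 'a vec set" where
  "rs A = {transpose_mat A *\<^sub>v c | c. c \<in> carrier_vec (dim_row A)}"

definition ker :: "'a::comm_ring_1 mat \<Rightarrow> 'a vec set" where
  "ker A = {x \<in> carrier_vec (dim_col A). A *\<^sub>v x = 0\<^sub>v (dim_row A)}"

definition sum_sp :: "'a::comm_ring_1 vec set \<Rightarrow> 'a vec set \<Rightarrow> 'a vec set" where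
  "sum_sp U V = {u + v | u v. u \<in> U \<and> v \<in> V}"

definition is_dsum3 :: "nat \<Rightarrow> 'a::comm_ring_1 vec set \<Rightarrow> 'a vec set \<Rightarrow> 'a vec set \<Rightarrow> 'a vec set \<Rightarrow> bool" where
  "is_dsum3 n X U V W \<longleftrightarrow>
     X = sum_sp (sum_sp U V) W \<and>
     (\<forall>u\<in>U. \<forall>v\<in>V. \<forall>w\<in>W. u + v + w = 0\<^sub>v n \<longrightarrow> u = 0\<^sub>v n \<and> v = 0\<^sub>v n \<and> w = 0\<^sub>v n)"

text \<open>Generic block matrix: row block sizes rsz, column block sizes csz, block (a,b) given by B a b
  (which should be a (rsz!a) x (csz!b) matrix).\<close>
fun locate :: "nat list \<Rightarrow> nat \<Rightarrow> nat \<times> nat" where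
  "locate [] i = (0, i)"
| "locate (s # ss) i = (if i < s then (0, i) else (let (a, r) = locate ss (i - s) in (Suc a, r)))"

definition block_mat :: "nat list \<Rightarrow> nat list \<Rightarrow> (nat \<Rightarrow> nat \<Rightarrow> 'a mat) \<Rightarrow> 'a mat" where
  "block_mat rsz csz B = mat (sum_list rsz) (sum_list csz)
     (\<lambda>(i, j). let (a, i') = locate rsz i; (b, j') = locate csz j in B a b $$ (i', j'))"

definition compatible :: "bit mat \<Rightarrow> bit mat \<Rightarrow> bit mat \<Rightarrow> bit mat \<Rightarrow> bool" where
  "compatible HX HG S T \<longleftrightarrow> HX * transpose_mat S = T * HG"

text \<open>Finely devised: there are u_1,u_2,... in rs HZ + rs FZ such that
  span(v_1..v_q,u_1,u_2,...) = (ker HG) S; the span of a list of vectors is the row space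
  of the matrix having them as rows.\<close>
definition finely_devised :: "nat \<Rightarrow> bit mat \<Rightarrow> bit mat \<Rightarrow> bit mat \<Rightarrow> bit mat \<Rightarrow> bit mat \<Rightarrow> bool" where
  "finely_devised n HZ FZ JZA HG S \<longleftrightarrow>
     (\<exists>us. set us \<subseteq> carrier_vec n \<inter> sum_sp (rs HZ) (rs FZ) \<and>
        rs (mat_of_rows n (rows JZA @ us)) = {transpose_mat S *\<^sub>v x | x. x \<in> ker HG})"

text \<open>Column block indices: block 0 is u_0, block j (1 <= j <= d_R - 1) is u_j,
  block d_R + i - 1 is w_i.\<close>
definition wcol :: "nat \<Rightarrow> nat \<Rightarrow> nat" where
  "wcol dR i = dR + i - 1"

definition colsMM :: "nat \<Rightarrow> nat \<Rightarrow> nat \<Rightarrow> nat \<Rightarrow> nat list" where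
  "colsMM dR n nG rG = n # replicate (dR - 1) nG @ replicate dR rG"

definition colsMB :: "nat \<Rightarrow> nat \<Rightarrow> nat \<Rightarrow> nat \<Rightarrow> nat list" where
  "colsMB dR n nG rG = n # replicate (dR - 1) nG @ replicate (dR - 1) rG"

definition HX_MM :: "nat \<Rightarrow> nat \<Rightarrow> nat \<Rightarrow> nat \<Rightarrow> nat \<Rightarrow> bit mat \<Rightarrow> bit mat \<Rightarrow> bit mat \<Rightarrow> bit mat" where
  "HX_MM dR n nG rG rX HX HG T =
     (let cs = colsMM dR n nG rG; rsz = rX # replicate (dR - 1) rG in
      block_mat rsz cs (\<lambda>a b.
        if a = 0 then
          (if b = 0 then HX else if b = wcol dR 1 then T else 0\<^sub>m (rsz ! a) (cs ! b))
        else
          (if b = a then HG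
           else if b = wcol dR a then 1\<^sub>m rG
           else if b = wcol dR (a + 1) then 1\<^sub>m rG
           else 0\<^sub>m (rsz ! a) (cs ! b))))"

definition HZ_MM :: "nat \<Rightarrow> nat \<Rightarrow> nat \<Rightarrow> nat \<Rightarrow> nat \<Rightarrow> bit mat \<Rightarrow> bit mat \<Rightarrow> bit mat \<Rightarrow> bit mat" where
  "HZ_MM dR n nG rG rZ HZ HG S =
     (let cs = colsMM dR n nG rG; rsz = rZ # replicate dR nG in
      block_mat rsz cs (\<lambda>a b.
        if a = 0 then
          (if b = 0 then HZ else 0\<^sub>m (rsz ! a) (cs ! b))
        else
          (if b = 0 \<and> a = 1 then S
           else if a \<ge> 2 \<and> b = a - 1 then 1\<^sub>m nG
           else if a \<le> dR - 1 \<and> b = a then 1\<^sub>m nG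
           else if b = wcol dR a then transpose_mat HG
           else 0\<^sub>m (rsz ! a) (cs ! b))))"

definition JX_MM :: "nat \<Rightarrow> nat \<Rightarrow> nat \<Rightarrow> nat \<Rightarrow> nat \<Rightarrow> bit mat \<Rightarrow> bit mat \<Rightarrow> bit mat \<Rightarrow> bit mat" where
  "JX_MM dR n nG rG m JXC S \<gamma> =
     (let cs = colsMM dR n nG rG; rsz = [m] in
      block_mat rsz cs (\<lambda>a b.
        if b = 0 then JXC
        else if 1 \<le> b \<and> b \<le> dR - 1 then JXC * transpose_mat S
        else if b = wcol dR dR then \<gamma>
        else 0\<^sub>m (rsz ! a) (cs ! b)))"

definition JZ_MM :: "nat \<Rightarrow> nat \<Rightarrow> nat \<Rightarrow> nat \<Rightarrow> nat \<Rightarrow> bit mat \<Rightarrow> bit mat" where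
  "JZ_MM dR n nG rG m JZC =
     (let cs = colsMM dR n nG rG; rsz = [m] in
      block_mat rsz cs (\<lambda>a b. if b = 0 then JZC else 0\<^sub>m (rsz ! a) (cs ! b)))"

definition HX_MB :: "nat \<Rightarrow> nat \<Rightarrow> nat \<Rightarrow> nat \<Rightarrow> nat \<Rightarrow> bit mat \<Rightarrow> bit mat \<Rightarrow> bit mat \<Rightarrow> bit mat" where
  "HX_MB dR n nG rG rX HX HG T =
     (let cs = colsMB dR n nG rG; rsz = rX # replicate (dR - 1) rG in
      block_mat rsz cs (\<lambda>a b.
        if a = 0 then
          (if b = 0 then HX else if b = wcol dR 1 then T else 0\<^sub>m (rsz ! a) (cs ! b))
        else
          (if b = a then HG
           else if b = wcol dR a then 1\<^sub>m rG
           else if a \<le> dR - 2 \<and> b = wcol dR (a + 1) then 1\<^sub>m rG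
           else 0\<^sub>m (rsz ! a) (cs ! b))))"

definition HZ_MB :: "nat \<Rightarrow> nat \<Rightarrow> nat \<Rightarrow> nat \<Rightarrow> nat \<Rightarrow> bit mat \<Rightarrow> bit mat \<Rightarrow> bit mat \<Rightarrow> bit mat" where
  "HZ_MB dR n nG rG rZ HZ HG S =
     (let cs = colsMB dR n nG rG; rsz = rZ # replicate (dR - 1) nG in
      block_mat rsz cs (\<lambda>a b.
        if a = 0 then
          (if b = 0 then HZ else 0\<^sub>m (rsz ! a) (cs ! b))
        else
          (if b = 0 \<and> a = 1 then S
           else if a \<ge> 2 \<and> b = a - 1 then 1\<^sub>m nG
           else if b = a then 1\<^sub>m nG
           else if b = wcol dR a then transpose_mat HG
           else 0\<^sub>m (rsz ! a) (cs ! b))))"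

definition JX_MB :: "nat \<Rightarrow> nat \<Rightarrow> nat \<Rightarrow> nat \<Rightarrow> nat \<Rightarrow> bit mat \<Rightarrow> bit mat \<Rightarrow> bit mat" where
  "JX_MB dR n nG rG m JX' S =
     (let cs = colsMB dR n nG rG; rsz = [m] in
      block_mat rsz cs (\<lambda>a b.
        if b = 0 then JX'
        else if 1 \<le> b \<and> b \<le> dR - 1 then JX' * transpose_mat S
        else 0\<^sub>m (rsz ! a) (cs ! b)))"

definition JZ_MB :: "nat \<Rightarrow> nat \<Rightarrow> nat \<Rightarrow> nat \<Rightarrow> nat \<Rightarrow> bit mat \<Rightarrow> bit mat" where
  "JZ_MB dR n nG rG m JZ' =
     (let cs = colsMB dR n nG rG; rsz = [m] in
      block_mat rsz cs (\<lambda>a b. if b = 0 then JZ' else 0\<^sub>m (rsz ! a) (cs ! b)))"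

end

theory Submission
  imports Defs
begin

(* The logical operators of both deformed codes live on the memory block u_0, together with
   copies J_X,C S^T on the blocks u_j and gamma on w_dR. Products with H_X and J_Z therefore only
   see the memory block, where rs J_Z lies in ker H_X and the rows of J_X, J_Z remain dual bases
   after the change of basis by Jbar; restricting to the rows of J_X,C, J_Z,C gives part (a).
   For H_Z, the memory row block gives H_Z J_X^T = 0, and every other row block meets the support
   of J_X in exactly two column blocks whose contributions both equal J_X,C S^T (on w_dR because
   J_X,C S^T = gamma H_G), so they cancel over F_2. *)

(* Keep sums and products of bits as ring operations instead of boolean connectives. *)
declare sum_of_bool_eq[simp del] mult_bit_eq_and[simp del] add_bit_eq_xor[simp del]

lemma row_in_rs:
  assumes i: "i < dim_row M"
  shows "row M i \<in> rs M"
proof -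
  have "transpose_mat M *\<^sub>v unit_vec (dim_row M) i = row M i"
    by (rule eq_vecI) (use i in \<open>auto simp: scalar_prod_right_unit\<close>)
  then show ?thesis
    unfolding rs_def by (metis (mono_tags, lifting) mem_Collect_eq unit_vec_carrier)
qed

lemma zero_in_rs: "0\<^sub>v (dim_col M) \<in> rs M"
proof -
  have "transpose_mat M *\<^sub>v 0\<^sub>v (dim_row M) = 0\<^sub>v (dim_col M)"
    by (rule eq_vecI) (auto simp: scalar_prod_def)
  then show ?thesis
    unfolding rs_def by (metis (mono_tags, lifting) mem_Collect_eq zero_carrier_vec)
qed

lemma rs_subset_carrier_vec: "rs M \<subseteq> carrier_vec (dim_col M)"
  unfolding rs_def carrier_vec_def by auto

lemma is_dsum3_middle_subset:
  assumes "is_dsum3 n X U V W" "0\<^sub>v n \<in> U" "0\<^sub>v n \<in> W" "V \<subseteq> carrier_vec n"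
  shows "V \<subseteq> X"
proof
  fix v assume v: "v \<in> V"
  then have "v = 0\<^sub>v n + v + 0\<^sub>v n" using assms(4) by auto
  then have "v \<in> sum_sp (sum_sp U V) W" unfolding sum_sp_def using assms(2,3) v by blast
  then show "v \<in> X" using assms(1) unfolding is_dsum3_def by simp
qed

lemma mult_transpose_eq_0_if_rows_in_ker:
  assumes H: "H \<in> carrier_mat r n" and M: "M \<in> carrier_mat m n"
    and rows: "\<And>j. j < m \<Longrightarrow> row M j \<in> ker H"
  shows "H * transpose_mat M = 0\<^sub>m r m"
proof (rule eq_matI)
  fix i j assume i: "i < dim_row (0\<^sub>m r m)" and j: "j < dim_col (0\<^sub>m r m)"
  have "H *\<^sub>v row M j = 0\<^sub>v r" using rows[of j] j H unfolding ker_def by simp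
  then have "(H *\<^sub>v row M j) $ i = 0" using i by simp
  then show "(H * transpose_mat M) $$ (i, j) = 0\<^sub>m r m $$ (i, j)"
    using i j H M by simp
qed (use H M in auto)

lemma mult_transpose_eq_0_if_is_dsum3_ker:
  assumes "is_dsum3 n (ker H) (rs G) (rs J) (rs F)"
    and H: "H \<in> carrier_mat r n" and "G \<in> carrier_mat rg n" and J: "J \<in> carrier_mat k n"
    and "F \<in> carrier_mat kf n"
  shows "H * transpose_mat J = 0\<^sub>m r k"
proof (rule mult_transpose_eq_0_if_rows_in_ker[OF H J])
  have "rs J \<subseteq> ker H"
  proof (rule is_dsum3_middle_subset[OF assms(1)])
    show "0\<^sub>v n \<in> rs G" using zero_in_rs[of G] assms(3) by simp
    show "0\<^sub>v n \<in> rs F" using zero_in_rs[of F] assms(5) by simp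
    show "rs J \<subseteq> carrier_vec n" using rs_subset_carrier_vec[of J] J by simp
  qed
  then show "row J j \<in> ker H" if "j < k" for j
    using row_in_rs[of j J] that J by auto
qed

lemma mult_transpose_mult_eq_0:
  fixes H :: "'a::comm_ring_1 mat"
  assumes "H * transpose_mat J = 0\<^sub>m r k"
    and H: "H \<in> carrier_mat r n" and J: "J \<in> carrier_mat k n" and P: "P \<in> carrier_mat p k"
  shows "H * transpose_mat (P * J) = 0\<^sub>m r p"
proof -
  have "H * transpose_mat (P * J) = (H * transpose_mat J) * transpose_mat P"
    using H J P by (simp add: transpose_mult[OF P J] assoc_mult_mat[of _ r n _ k _ p])
  then show ?thesis using assms(1) P by simp
qed

lemma change_of_dual_bases:
  fixes JX :: "'a::comm_ring_1 mat"
  assumes JJ: "JX * transpose_mat JZ = 1\<^sub>m k" and PQ: "P * Q = 1\<^sub>m k"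
    and JX: "JX \<in> carrier_mat k n" and JZ: "JZ \<in> carrier_mat k n"
    and P: "P \<in> carrier_mat k k" and Q: "Q \<in> carrier_mat k k"
  shows "(transpose_mat Q * JX) * transpose_mat (P * JZ) = 1\<^sub>m k"
proof -
  have "(transpose_mat Q * JX) * transpose_mat (P * JZ)
      = transpose_mat Q * ((JX * transpose_mat JZ) * transpose_mat P)"
    using JX JZ P Q by (simp add: transpose_mult[OF P JZ] assoc_mult_mat[of _ k n _ k _ k]
        assoc_mult_mat[of _ k k _ n _ k])
  also have "\<dots> = transpose_mat (P * Q)"
    using JJ P Q by (simp add: transpose_mult[OF P Q])
  finally show ?thesis using PQ by simp
qed

lemma index_mult_transpose_mat:
  assumes "A \<in> carrier_mat a c" "B \<in> carrier_mat b c" "i < a" "j < b"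
  shows "(A * transpose_mat B) $$ (i, j) = (\<Sum>r<c. A $$ (i, r) * B $$ (j, r))"
  using assms by (auto simp: scalar_prod_def lessThan_atLeast0 intro!: sum.cong)

lemma index_append_rows_lower:
  assumes "A \<in> carrier_mat a c" "B \<in> carrier_mat b c" "j < b" "r < c"
  shows "(A @\<^sub>r B) $$ (a + j, r) = B $$ (j, r)"
  using assms by (simp add: append_rows_def)

lemma mult_transpose_append_rows_lower:
  assumes H: "H \<in> carrier_mat h c" and A: "A \<in> carrier_mat a c" and B: "B \<in> carrier_mat b c"
    and "H * transpose_mat (A @\<^sub>r B) = 0\<^sub>m h (a + b)"
  shows "H * transpose_mat B = 0\<^sub>m h b"
proof (rule eq_matI)
  fix i j assume i: "i < dim_row (0\<^sub>m h b)" and j: "j < dim_col (0\<^sub>m h b)"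
  have "(H * transpose_mat B) $$ (i, j) = (\<Sum>r<c. H $$ (i, r) * B $$ (j, r))"
    by (rule index_mult_transpose_mat[OF H B]) (use i j in auto)
  also have "\<dots> = (\<Sum>r<c. H $$ (i, r) * (A @\<^sub>r B) $$ (a + j, r))"
    using index_append_rows_lower[OF A B] j by simp
  also have "\<dots> = (H * transpose_mat (A @\<^sub>r B)) $$ (i, a + j)"
    by (rule index_mult_transpose_mat[symmetric, OF H]) (use A B i j in auto)
  finally show "(H * transpose_mat B) $$ (i, j) = 0\<^sub>m h b $$ (i, j)"
    using assms(4) i j by simp
qed (use H B in auto)

lemma append_rows_mult_transpose_lower_right:
  assumes A: "A \<in> carrier_mat a c" and B: "B \<in> carrier_mat b c"
    and C: "C \<in> carrier_mat a c" and D: "D \<in> carrier_mat b c"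
    and "(A @\<^sub>r B) * transpose_mat (C @\<^sub>r D) = 1\<^sub>m (a + b)"
  shows "B * transpose_mat D = 1\<^sub>m b"
proof (rule eq_matI)
  fix i j assume i: "i < dim_row (1\<^sub>m b)" and j: "j < dim_col (1\<^sub>m b)"
  have "(B * transpose_mat D) $$ (i, j) = (\<Sum>r<c. B $$ (i, r) * D $$ (j, r))"
    by (rule index_mult_transpose_mat[OF B D]) (use i j in auto)
  also have "\<dots> = (\<Sum>r<c. (A @\<^sub>r B) $$ (a + i, r) * (C @\<^sub>r D) $$ (a + j, r))"
    using index_append_rows_lower[OF A B] index_append_rows_lower[OF C D] i j by simp
  also have "\<dots> = ((A @\<^sub>r B) * transpose_mat (C @\<^sub>r D)) $$ (a + i, a + j)"
    by (rule index_mult_transpose_mat[symmetric]) (use A B C D i j in auto)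
  finally show "(B * transpose_mat D) $$ (i, j) = 1\<^sub>m b $$ (i, j)"
    using assms(5) i j by simp
qed (use B D in auto)

lemma sum_one_mat_row:
  assumes "i < c"
  shows "(\<Sum>r<c. 1\<^sub>m c $$ (i, r) * f r) = (f i :: 'a::semiring_1)"
proof -
  have "(\<Sum>r<c. 1\<^sub>m c $$ (i, r) * f r) = (\<Sum>r<c. if i = r then f r else 0)"
    using assms by (intro sum.cong) auto
  then show ?thesis using assms by simp
qed

lemma sum_lessThan_two_equal_terms:
  fixes f :: "nat \<Rightarrow> bit"
  assumes "b1 < N" "b2 < N" "b1 \<noteq> b2" "f b1 = f b2"
    and "\<And>b. b < N \<Longrightarrow> b \<noteq> b1 \<Longrightarrow> b \<noteq> b2 \<Longrightarrow> f b = 0"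
  shows "(\<Sum>b<N. f b) = 0"
proof -
  have "(\<Sum>b<N. f b) = (\<Sum>b\<in>{b1, b2}. f b)"
    using assms by (intro sum.mono_neutral_right) auto
  also have "\<dots> = f b1 + f b1" using assms(3,4) by simp
  also have "\<dots> = 0" by (cases "f b1") auto
  finally show ?thesis .
qed

lemma locate_less:
  assumes "i < sum_list ss"
  shows "fst (locate ss i) < length ss \<and> snd (locate ss i) < ss ! fst (locate ss i)"
  using assms
proof (induction ss arbitrary: i)
  case (Cons s ss)
  show ?case
  proof (cases "i < s")
    case False
    with Cons.prems have "i - s < sum_list ss" by simp
    from Cons.IH[OF this] False show ?thesis by (auto split: prod.split)
  qed simp
qed simp

lemma sum_lessThan_add:
  fixes m n :: nat
  shows "(\<Sum>c<m + n. f c) = (\<Sum>c<m. f c) + (\<Sum>c<n. f (m + c))"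
  by (induction n) (auto simp: add.assoc)

lemma sum_lessThan_sum_list_locate:
  "(\<Sum>c<sum_list cs. f (locate cs c)) = (\<Sum>b<length cs. \<Sum>r<cs ! b. f (b, r))"
proof (induction cs arbitrary: f)
  case (Cons s ss)
  have "(\<Sum>c<sum_list ss. f (locate (s # ss) (s + c)))
      = (\<Sum>c<sum_list ss. (\<lambda>(b, r). f (Suc b, r)) (locate ss c))"
    by (rule sum.cong) (auto split: prod.split)
  then show ?case
    by (simp add: sum_lessThan_add sum.lessThan_Suc_shift Cons.IH del: sum.lessThan_Suc)
qed simp

lemma index_block_mat:
  assumes "i < sum_list rsz" "j < sum_list csz" "locate rsz i = (a, i')" "locate csz j = (b, j')"
  shows "block_mat rsz csz B $$ (i, j) = B a b $$ (i', j')"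
  using assms by (simp add: block_mat_def)

lemma index_block_mat_mult_transpose:
  assumes "i < sum_list rsz" "j < m" "locate rsz i = (a, i')"
  shows "(block_mat rsz cs A * transpose_mat (block_mat [m] cs B)) $$ (i, j)
     = (\<Sum>b<length cs. \<Sum>r<cs ! b. A a b $$ (i', r) * B 0 b $$ (j, r))"
proof -
  have "(block_mat rsz cs A * transpose_mat (block_mat [m] cs B)) $$ (i, j)
     = (\<Sum>c<sum_list cs. (\<lambda>(b, r). A a b $$ (i', r) * B 0 b $$ (j, r)) (locate cs c))"
    using assms
    by (auto simp: block_mat_def scalar_prod_def lessThan_atLeast0 intro!: sum.cong
        split: prod.split)
  then show ?thesis by (simp add: sum_lessThan_sum_list_locate)
qed

lemma block_mat_mult_transpose_eq_0I:
  assumes "\<And>a i' j. a < length rsz \<Longrightarrow> i' < rsz ! a \<Longrightarrow> j < m \<Longrightarrow>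
      (\<Sum>b<length cs. \<Sum>r<cs ! b. A a b $$ (i', r) * B 0 b $$ (j, r)) = 0"
  shows "block_mat rsz cs A * transpose_mat (block_mat [m] cs B) = 0\<^sub>m (sum_list rsz) m"
proof (rule eq_matI)
  fix i j assume i: "i < dim_row (0\<^sub>m (sum_list rsz) m)"
    and j: "j < dim_col (0\<^sub>m (sum_list rsz) m)"
  obtain a i' where loc: "locate rsz i = (a, i')" by fastforce
  with locate_less[of i rsz] i have "a < length rsz" "i' < rsz ! a" by auto
  with assms j show "(block_mat rsz cs A * transpose_mat (block_mat [m] cs B)) $$ (i, j)
      = 0\<^sub>m (sum_list rsz) m $$ (i, j)"
    using i loc by (simp add: index_block_mat_mult_transpose)
qed (simp_all add: block_mat_def)

lemma block_mat_mult_transpose_first_column: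
  assumes B: "\<And>b. 0 < b \<Longrightarrow> b < length cs \<Longrightarrow> B 0 b = 0\<^sub>m m (cs ! b)"
    and A: "\<And>a. a < length rsz \<Longrightarrow> A a 0 \<in> carrier_mat (rsz ! a) (cs ! 0)"
    and B0: "B 0 0 \<in> carrier_mat m (cs ! 0)" and cs: "cs \<noteq> []"
  shows "block_mat rsz cs A * transpose_mat (block_mat [m] cs B)
       = block_mat rsz [m] (\<lambda>a _. A a 0 * transpose_mat (B 0 0))"
proof (rule eq_matI)
  fix i j assume "i < dim_row (block_mat rsz [m] (\<lambda>a _. A a 0 * transpose_mat (B 0 0)))"
    and "j < dim_col (block_mat rsz [m] (\<lambda>a _. A a 0 * transpose_mat (B 0 0)))"
  then have i: "i < sum_list rsz" and j: "j < m" by (simp_all add: block_mat_def)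
  obtain a i' where loc: "locate rsz i = (a, i')" by fastforce
  with locate_less[of i rsz] i have a: "a < length rsz" and i': "i' < rsz ! a" by auto
  obtain l where l: "length cs = Suc l" using cs by (cases cs) auto
  have "(block_mat rsz cs A * transpose_mat (block_mat [m] cs B)) $$ (i, j)
      = (\<Sum>r<cs ! 0. A a 0 $$ (i', r) * B 0 0 $$ (j, r))"
    using B j
    by (simp add: index_block_mat_mult_transpose[OF i j loc] l sum.lessThan_Suc_shift
        del: sum.lessThan_Suc)
  also have "\<dots> = (A a 0 * transpose_mat (B 0 0)) $$ (i', j)"
    by (rule index_mult_transpose_mat[symmetric, OF A[OF a] B0 i' j])
  also have "\<dots> = block_mat rsz [m] (\<lambda>a _. A a 0 * transpose_mat (B 0 0)) $$ (i, j)"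
    using i j loc by (simp add: index_block_mat)
  finally show "(block_mat rsz cs A * transpose_mat (block_mat [m] cs B)) $$ (i, j)
      = block_mat rsz [m] (\<lambda>a _. A a 0 * transpose_mat (B 0 0)) $$ (i, j)" .
qed (simp_all add: block_mat_def)

lemma block_mat_singleton: "M \<in> carrier_mat r c \<Longrightarrow> block_mat [r] [c] (\<lambda>_ _. M) = M"
  by (rule eq_matI) (auto simp: block_mat_def)

lemma length_colsMM: "dR \<ge> 1 \<Longrightarrow> length (colsMM dR n nG rG) = 2 * dR"
  by (simp add: colsMM_def)

lemma nth_colsMM:
  "dR \<ge> 1 \<Longrightarrow> b < 2 * dR \<Longrightarrow>
    colsMM dR n nG rG ! b = (if b = 0 then n else if b < dR then nG else rG)"
  by (auto simp: colsMM_def nth_append nth_Cons')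

lemma length_colsMB: "dR \<ge> 1 \<Longrightarrow> length (colsMB dR n nG rG) = 2 * dR - 1"
  by (simp add: colsMB_def)

lemma nth_colsMB:
  "dR \<ge> 1 \<Longrightarrow> b < 2 * dR - 1 \<Longrightarrow>
    colsMB dR n nG rG ! b = (if b = 0 then n else if b < dR then nG else rG)"
  by (auto simp: colsMB_def nth_append nth_Cons')

lemma HX_MM_mult_transpose_JZ_MM:
  assumes dR: "dR \<ge> 2" and HX: "HX \<in> carrier_mat rX n" and JZC: "JZC \<in> carrier_mat m n"
    and HX_JZC: "HX * transpose_mat JZC = 0\<^sub>m rX m"
  shows "HX_MM dR n nG rG rX HX HG T * transpose_mat (JZ_MM dR n nG rG m JZC)
    = 0\<^sub>m (rX + (dR - 1) * rG) m"
proof -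
  have orth: "(\<Sum>r<n. HX $$ (i, r) * JZC $$ (j, r)) = 0" if "i < rX" "j < m" for i j
    using HX_JZC index_mult_transpose_mat[OF HX JZC that] that by simp
  have "HX_MM dR n nG rG rX HX HG T * transpose_mat (JZ_MM dR n nG rG m JZC)
    = 0\<^sub>m (sum_list (rX # replicate (dR - 1) rG)) m"
    unfolding HX_MM_def JZ_MM_def Let_def
    by (rule block_mat_mult_transpose_eq_0I, rule sum.neutral)
      (use dR orth in \<open>auto simp: colsMM_def wcol_def nth_Cons'\<close>)
  then show ?thesis by (simp add: sum_list_replicate)
qed

lemma HZ_MM_mult_transpose_JX_MM:
  assumes dR: "dR \<ge> 2" and HZ: "HZ \<in> carrier_mat rZ n" and JXC: "JXC \<in> carrier_mat m n"
    and HG: "HG \<in> carrier_mat rG nG" and S: "S \<in> carrier_mat nG n"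
    and \<gamma>: "\<gamma> \<in> carrier_mat m rG"
    and HZ_JXC: "HZ * transpose_mat JXC = 0\<^sub>m rZ m"
    and JXC_S: "JXC * transpose_mat S = \<gamma> * HG"
  shows "HZ_MM dR n nG rG rZ HZ HG S * transpose_mat (JX_MM dR n nG rG m JXC S \<gamma>)
    = 0\<^sub>m (rZ + dR * nG) m"
proof -
  let ?Y = "JXC * transpose_mat S"
  have HZ_term: "(\<Sum>r<n. HZ $$ (i, r) * JXC $$ (j, r)) = 0" if "i < rZ" "j < m" for i j
    using HZ_JXC index_mult_transpose_mat[OF HZ JXC that] that by simp
  have S_term: "(\<Sum>r<n. S $$ (i, r) * JXC $$ (j, r)) = ?Y $$ (j, i)"
    if "i < nG" "j < m" for i j
    using index_mult_transpose_mat[OF JXC S that(2,1)] by (simp add: mult.commute)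
  have id_term: "(\<Sum>r<nG. 1\<^sub>m nG $$ (i, r) * ?Y $$ (j, r)) = ?Y $$ (j, i)"
    if "i < nG" for i j
    using that by (rule sum_one_mat_row)
  have HG_term: "(\<Sum>r<rG. transpose_mat HG $$ (i, r) * \<gamma> $$ (j, r)) = ?Y $$ (j, i)"
    if "i < nG" "j < m" for i j
    using HG \<gamma> that by (simp add: JXC_S scalar_prod_def lessThan_atLeast0 mult.commute)
  \<comment> \<open>Keep identity blocks and transposes unevaluated, so that the rules above apply.\<close>
  note index_one_mat[simp del] index_transpose_mat[simp del]
  have "HZ_MM dR n nG rG rZ HZ HG S * transpose_mat (JX_MM dR n nG rG m JXC S \<gamma>)
    = 0\<^sub>m (sum_list (rZ # replicate dR nG)) m"
    unfolding HZ_MM_def JX_MM_def Let_def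
  proof (rule block_mat_mult_transpose_eq_0I, goal_cases)
    case (1 a i j)
    then have a: "a \<le> dR" and j: "j < m" by simp_all
    consider (checks) "a = 0" | (first) "a = 1" | (inner) "1 < a" "a < dR" | (last) "a = dR"
      using a by fastforce
    then show ?case
    proof cases
      case checks
      show ?thesis
        by (rule sum.neutral)
          (use checks 1 dR HZ_term in \<open>simp add: length_colsMM nth_colsMM wcol_def\<close>)
    next
      case first
      with 1 dR have i: "i < nG" by simp
      show ?thesis
        by (rule sum_lessThan_two_equal_terms[of 0 _ 1])
          (use first dR i j S_term id_term in \<open>auto simp: length_colsMM nth_colsMM wcol_def\<close>)
    next
      case inner
      with 1 have i: "i < nG" by (auto simp: nth_Cons')
      show ?thesis
        by (rule sum_lessThan_two_equal_terms[of "a - 1" _ a])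
          (use inner dR i j id_term in \<open>auto simp: length_colsMM nth_colsMM wcol_def\<close>)
    next
      case last
      with 1 dR have i: "i < nG" by (auto simp: nth_Cons')
      show ?thesis
        by (rule sum_lessThan_two_equal_terms[of "dR - 1" _ "2 * dR - 1"])
          (use last dR i j id_term HG_term in \<open>auto simp: length_colsMM nth_colsMM wcol_def\<close>)
    qed
  qed
  then show ?thesis by (simp add: sum_list_replicate)
qed

lemma JX_MM_mult_transpose_JZ_MM:
  assumes JXC: "JXC \<in> carrier_mat m n" and JZC: "JZC \<in> carrier_mat m n"
    and JXC_JZC: "JXC * transpose_mat JZC = 1\<^sub>m m"
  shows "JX_MM dR n nG rG m JXC S \<gamma> * transpose_mat (JZ_MM dR n nG rG m JZC) = 1\<^sub>m m"
proof -
  have "JX_MM dR n nG rG m JXC S \<gamma> * transpose_mat (JZ_MM dR n nG rG m JZC)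
    = block_mat [m] [m] (\<lambda>_ _. JXC * transpose_mat JZC)"
    unfolding JX_MM_def JZ_MM_def Let_def
    using JXC JZC by (subst block_mat_mult_transpose_first_column) (auto simp: colsMM_def)
  then show ?thesis using JXC_JZC by (simp add: block_mat_singleton)
qed

lemma HX_MB_mult_transpose_JZ_MB:
  assumes dR: "dR \<ge> 2" and HX: "HX \<in> carrier_mat rX n" and JZ: "JZ \<in> carrier_mat m n"
    and HX_JZ: "HX * transpose_mat JZ = 0\<^sub>m rX m"
  shows "HX_MB dR n nG rG rX HX HG T * transpose_mat (JZ_MB dR n nG rG m JZ)
    = 0\<^sub>m (rX + (dR - 1) * rG) m"
proof -
  have orth: "(\<Sum>r<n. HX $$ (i, r) * JZ $$ (j, r)) = 0" if "i < rX" "j < m" for i j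
    using HX_JZ index_mult_transpose_mat[OF HX JZ that] that by simp
  have "HX_MB dR n nG rG rX HX HG T * transpose_mat (JZ_MB dR n nG rG m JZ)
    = 0\<^sub>m (sum_list (rX # replicate (dR - 1) rG)) m"
    unfolding HX_MB_def JZ_MB_def Let_def
    by (rule block_mat_mult_transpose_eq_0I, rule sum.neutral)
      (use dR orth in \<open>auto simp: colsMB_def wcol_def nth_Cons'\<close>)
  then show ?thesis by (simp add: sum_list_replicate)
qed

lemma HZ_MB_mult_transpose_JX_MB:
  assumes dR: "dR \<ge> 2" and HZ: "HZ \<in> carrier_mat rZ n" and JX: "JX \<in> carrier_mat m n"
    and S: "S \<in> carrier_mat nG n" and HZ_JX: "HZ * transpose_mat JX = 0\<^sub>m rZ m"
  shows "HZ_MB dR n nG rG rZ HZ HG S * transpose_mat (JX_MB dR n nG rG m JX S)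
    = 0\<^sub>m (rZ + (dR - 1) * nG) m"
proof -
  let ?Y = "JX * transpose_mat S"
  have HZ_term: "(\<Sum>r<n. HZ $$ (i, r) * JX $$ (j, r)) = 0" if "i < rZ" "j < m" for i j
    using HZ_JX index_mult_transpose_mat[OF HZ JX that] that by simp
  have S_term: "(\<Sum>r<n. S $$ (i, r) * JX $$ (j, r)) = ?Y $$ (j, i)"
    if "i < nG" "j < m" for i j
    using index_mult_transpose_mat[OF JX S that(2,1)] by (simp add: mult.commute)
  have id_term: "(\<Sum>r<nG. 1\<^sub>m nG $$ (i, r) * ?Y $$ (j, r)) = ?Y $$ (j, i)"
    if "i < nG" for i j
    using that by (rule sum_one_mat_row)
  note index_one_mat[simp del] index_transpose_mat[simp del]
  have "HZ_MB dR n nG rG rZ HZ HG S * transpose_mat (JX_MB dR n nG rG m JX S)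
    = 0\<^sub>m (sum_list (rZ # replicate (dR - 1) nG)) m"
    unfolding HZ_MB_def JX_MB_def Let_def
  proof (rule block_mat_mult_transpose_eq_0I, goal_cases)
    case (1 a i j)
    then have a: "a < dR" and j: "j < m" using dR by simp_all
    consider (checks) "a = 0" | (first) "a = 1" | (inner) "1 < a" "a < dR"
      using a by fastforce
    then show ?case
    proof cases
      case checks
      show ?thesis
        by (rule sum.neutral)
          (use checks 1 dR HZ_term in \<open>simp add: length_colsMB nth_colsMB wcol_def\<close>)
    next
      case first
      with 1 dR have i: "i < nG" by simp
      show ?thesis
        by (rule sum_lessThan_two_equal_terms[of 0 _ 1])
          (use first dR i j S_term id_term in \<open>auto simp: length_colsMB nth_colsMB wcol_def\<close>)
    next
      case inner
      with 1 have i: "i < nG" by (auto simp: nth_Cons')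
      show ?thesis
        by (rule sum_lessThan_two_equal_terms[of "a - 1" _ a])
          (use inner dR i j id_term in \<open>auto simp: length_colsMB nth_colsMB wcol_def\<close>)
    qed
  qed
  then show ?thesis by (simp add: sum_list_replicate)
qed

lemma JX_MB_mult_transpose_JZ_MB:
  assumes JX: "JX \<in> carrier_mat m n" and JZ: "JZ \<in> carrier_mat m n"
    and JX_JZ: "JX * transpose_mat JZ = 1\<^sub>m m"
  shows "JX_MB dR n nG rG m JX S * transpose_mat (JZ_MB dR n nG rG m JZ) = 1\<^sub>m m"
proof -
  have "JX_MB dR n nG rG m JX S * transpose_mat (JZ_MB dR n nG rG m JZ)
    = block_mat [m] [m] (\<lambda>_ _. JX * transpose_mat JZ)"
    unfolding JX_MB_def JZ_MB_def Let_def
    using JX JZ by (subst block_mat_mult_transpose_first_column) (auto simp: colsMB_def)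
  then show ?thesis using JX_JZ by (simp add: block_mat_singleton)
qed

theorem proposition2:
  fixes n rX rZ k kg q rG nG dR :: nat
    and HX HZ JX JZ FX FZ JZA JZC Jbar Jinv JXA JXC HG S T \<gamma> :: "bit mat"
  assumes dR: "dR \<ge> 2"
    and HX: "HX \<in> carrier_mat rX n" and HZ: "HZ \<in> carrier_mat rZ n"
    and JX: "JX \<in> carrier_mat k n" and JZ: "JZ \<in> carrier_mat k n"
    and FX: "FX \<in> carrier_mat kg n" and FZ: "FZ \<in> carrier_mat kg n"
    and kerX: "is_dsum3 n (ker HX) (rs HZ) (rs JZ) (rs FZ)"
    and kerZ: "is_dsum3 n (ker HZ) (rs HX) (rs JX) (rs FX)"
    and JJ: "JX * transpose_mat JZ = 1\<^sub>m k"
    and FF: "FX * transpose_mat FZ = 1\<^sub>m kg"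
    and q: "q \<le> k"
    and JZA: "JZA \<in> carrier_mat q n" and JZC: "JZC \<in> carrier_mat (k - q) n"
    and indep: "distinct (rows JZA) \<and> (\<forall>c \<in> carrier_vec q. transpose_mat JZA *\<^sub>v c = 0\<^sub>v n \<longrightarrow> c = 0\<^sub>v q)"
    and basis: "rs (JZA @\<^sub>r JZC) = rs JZ"
    and Jbar: "Jbar \<in> carrier_mat k k" and Jinv: "Jinv \<in> carrier_mat k k"
    and Jbar_inv: "Jbar * Jinv = 1\<^sub>m k" "Jinv * Jbar = 1\<^sub>m k"
    and JZ': "JZA @\<^sub>r JZC = Jbar * JZ"
    and JXA: "JXA \<in> carrier_mat q n" and JXC: "JXC \<in> carrier_mat (k - q) n"
    and JX': "JXA @\<^sub>r JXC = transpose_mat Jinv * JX"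
    and HG: "HG \<in> carrier_mat rG nG" and S: "S \<in> carrier_mat nG n" and T: "T \<in> carrier_mat rX rG"
  shows
   "(compatible HX HG S T \<and> finely_devised n HZ FZ JZA HG S \<and>
      \<gamma> \<in> carrier_mat (k - q) rG \<and> JXC * transpose_mat S = \<gamma> * HG \<longrightarrow>
      HX_MM dR n nG rG rX HX HG T * transpose_mat (JZ_MM dR n nG rG (k - q) JZC)
        = 0\<^sub>m (rX + (dR - 1) * rG) (k - q) \<and>
      HZ_MM dR n nG rG rZ HZ HG S * transpose_mat (JX_MM dR n nG rG (k - q) JXC S \<gamma>)
        = 0\<^sub>m (rZ + dR * nG) (k - q) \<and>
      JX_MM dR n nG rG (k - q) JXC S \<gamma> * transpose_mat (JZ_MM dR n nG rG (k - q) JZC)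
        = 1\<^sub>m (k - q))
  \<and> (compatible HX HG S T \<longrightarrow>
      HX_MB dR n nG rG rX HX HG T * transpose_mat (JZ_MB dR n nG rG k (JZA @\<^sub>r JZC))
        = 0\<^sub>m (rX + (dR - 1) * rG) k \<and>
      HZ_MB dR n nG rG rZ HZ HG S * transpose_mat (JX_MB dR n nG rG k (JXA @\<^sub>r JXC) S)
        = 0\<^sub>m (rZ + (dR - 1) * nG) k \<and>
      JX_MB dR n nG rG k (JXA @\<^sub>r JXC) S * transpose_mat (JZ_MB dR n nG rG k (JZA @\<^sub>r JZC))
        = 1\<^sub>m k)"
proof -
  have k: "q + (k - q) = k" using q by simp
  have JZ'_carrier: "JZA @\<^sub>r JZC \<in> carrier_mat k n"
    using carrier_append_rows[OF JZA JZC] k by simp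
  have JX'_carrier: "JXA @\<^sub>r JXC \<in> carrier_mat k n"
    using carrier_append_rows[OF JXA JXC] k by simp
  have HX_JZ': "HX * transpose_mat (JZA @\<^sub>r JZC) = 0\<^sub>m rX k"
    unfolding JZ' using mult_transpose_eq_0_if_is_dsum3_ker[OF kerX HX HZ JZ FZ]
    by (rule mult_transpose_mult_eq_0[OF _ HX JZ Jbar])
  have HZ_JX': "HZ * transpose_mat (JXA @\<^sub>r JXC) = 0\<^sub>m rZ k"
    unfolding JX' using mult_transpose_eq_0_if_is_dsum3_ker[OF kerZ HZ HX JX FX]
    by (rule mult_transpose_mult_eq_0[OF _ HZ JX]) (use Jinv in simp)
  have JX'_JZ': "(JXA @\<^sub>r JXC) * transpose_mat (JZA @\<^sub>r JZC) = 1\<^sub>m k"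
    unfolding JX' JZ' by (rule change_of_dual_bases[OF JJ Jbar_inv(1) JX JZ Jbar Jinv])
  have HX_JZC: "HX * transpose_mat JZC = 0\<^sub>m rX (k - q)"
    by (rule mult_transpose_append_rows_lower[OF HX JZA JZC]) (simp add: k HX_JZ')
  have HZ_JXC: "HZ * transpose_mat JXC = 0\<^sub>m rZ (k - q)"
    by (rule mult_transpose_append_rows_lower[OF HZ JXA JXC]) (simp add: k HZ_JX')
  have JXC_JZC: "JXC * transpose_mat JZC = 1\<^sub>m (k - q)"
    by (rule append_rows_mult_transpose_lower_right[OF JXA JXC JZA JZC]) (simp add: k JX'_JZ')
  show ?thesis
    using HX_MM_mult_transpose_JZ_MM[OF dR HX JZC HX_JZC]
      HZ_MM_mult_transpose_JX_MM[OF dR HZ JXC HG S _ HZ_JXC]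
      JX_MM_mult_transpose_JZ_MM[OF JXC JZC JXC_JZC]
      HX_MB_mult_transpose_JZ_MB[OF dR HX JZ'_carrier HX_JZ']
      HZ_MB_mult_transpose_JX_MB[OF dR HZ JX'_carrier S HZ_JX']
      JX_MB_mult_transpose_JZ_MB[OF JX'_carrier JZ'_carrier JX'_JZ']
    by blast
qed

end
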